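(* Let $M$ be an $\mathbf{FB}$-module and $a:\mathrm{Sym}(\mathbf V)\otimes M\to\mathrm{Sym}(\mathbf V)\otimes M$ a map, with associated symmetric operation $\phi$ given by $a(t^B\otimes x)=\sum_{A\subseteq S}t^A\otimes\phi^S_{A,B}(x)$ for $B\subseteq S$, $x\in M(S\setminus B)$. Then $a$ defines a representation of $\underline{\mathfrak a}(\mathbf V\oplus\mathbf V^* )$ if and only if $\phi$ satisfies the following for all finite sets $S$ and subsets $A,B,C,D\subseteq S$ with $A\cap B=\emptyset$, $C\cap D=\emptyset$: (B1) if $A\cap C=B\cap D=\emptyset$, then $\phi^{S\setminus C}_{D,A}\circ\phi^{S\setminus A}_{C,B}=\phi^{S\setminus D}_{C,B}\circ\phi^{S\setminus B}_{D,A}$; (B2) if $A\cap C=\emptyset$ and $B\cap D\ne\emptyset$, then $\phi^{S\setminus C}_{D,A}\circ\phi^{S\setminus A}_{C,B}=\sum_{\emptyset\ne X\subseteq B\cap D}\phi^{S\setminus X}_{(D\setminus X)\cup C,\,A\cup(B\setminus X)}$; (B3) if $A\cap C\ne\emptyset$ and $B\cap D\ne\emptyset$, then $\sum_{X\subseteq B\cap D}\phi^{S\setminus X}_{(D\setminus X)\cup C,\,A\cup(B\setminus X)}=\sum_{X\subseteq A\cap C}\phi^{S\setminus X}_{(C\setminus X)\cup D,\,B\cup(A\setminus X)}$.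
   Context: $k$ is a commutative ring; $\mathbf{FB}$-modules are functors from finite sets and bijections to $k$-modules, $(M\otimes N)(S)=\bigoplus_{T\subseteq S}M(T)\otimes N(S\setminus T)$, symmetry $\tau$. $\mathbf V$ is $k$ on singletons, $0$ otherwise. $P=\mathrm{Sym}(\mathbf V)=\bigoplus_n\mathrm{Sym}^n(\mathbf V)$ with $\mathrm{Sym}^n(\mathbf V)(S)$ free on $t^S$ if $|S|=n$ and $0$ otherwise, so $(P\otimes M)(S)=\bigoplus_{B\subseteq S}t^B\otimes M(S\setminus B)$; divided powers are identified with $P$ via the averaging isomorphism. $m(t^A\otimes t^B)=t^{A\cup B}$, $\Delta(t^B)=\sum_{B=B_1\sqcup B_2}t^{B_1}\otimes t^{B_2}$. $a$ is a representation of the curried Weyl Lie algebra $\underline{\mathfrak a}(\mathbf V\oplus\mathbf V^* )$ if $[a_1,a_2]=a'-a''$, where $a_2=\mathrm{id}_P\otimes a$, $a_1=\tau(\mathrm{id}_P\otimes a)\tau$, $[a_1,a_2]=a_1a_2-a_2a_1:P\otimes P\otimes M\to P\otimes P\otimes M$, $a'=(m\otimes\mathrm{id}\otimes\mathrm{id})(\mathrm{id}\otimes\Delta\otimes\mathrm{id})(\mathrm{id}_P\otimes a)(\mathrm{id}\otimes m\otimes\mathrm{id})(\tau\otimes\mathrm{id}\otimes\mathrm{id})(\mathrm{id}\otimes\Delta\otimes\mathrm{id})$, $a''=\tau a'\tau$. The maps $\phi^S_{A,B}:M(S\setminus B)\to M(S\setminus A)$ are natural in bijections. *)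

theory Defs
  imports "HOL.Modules"
begin

text \<open>
  Finite sets are the finite subsets of a type 'u. An FB-module M is modelled
  by a family of k-submodules M S (S finite) of an ambient k-module 'm (scalar action scale),
  together with actions act sigma S : M S -> M (sigma ` S) for bijections sigma : S -> sigma ` S.

  (P (x) M)(S) = (+)_{B subset S} t^B (x) M(S - B) is represented by functions
  f :: 'u set => 'm with f B in M (S - B) for B subset S and f B = 0 otherwise
  (f B is the coefficient of t^B).
  (P (x) P (x) M)(S) is represented by g :: 'u set => 'u set => 'm, with g B1 B2 the
  coefficient of t^B1 (x) t^B2, and (P (x) P (x) P (x) M)(S) similarly with three arguments.
\<close>

definition lin_on :: "('k::comm_ring_1 \<Rightarrow> 'm::ab_group_add \<Rightarrow> 'm) \<Rightarrow> 'm set \<Rightarrow> 'm set \<Rightarrow> ('m \<Rightarrow> 'm) \<Rightarrow> bool"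
  where "lin_on scale X Y f \<longleftrightarrow> (\<forall>x\<in>X. f x \<in> Y) \<and> (\<forall>x\<in>X. \<forall>y\<in>X. f (x + y) = f x + f y)
      \<and> (\<forall>c. \<forall>x\<in>X. f (scale c x) = scale c (f x))"

definition FB_module ::
  "('k::comm_ring_1 \<Rightarrow> 'm::ab_group_add \<Rightarrow> 'm) \<Rightarrow> ('u set \<Rightarrow> 'm set) \<Rightarrow> (('u \<Rightarrow> 'u) \<Rightarrow> 'u set \<Rightarrow> 'm \<Rightarrow> 'm) \<Rightarrow> bool"
  where "FB_module scale M act \<longleftrightarrow>
     module scale \<and>
     (\<forall>S. finite S \<longrightarrow> 0 \<in> M S \<and> (\<forall>x\<in>M S. \<forall>y\<in>M S. x + y \<in> M S) \<and> (\<forall>c. \<forall>x\<in>M S. scale c x \<in> M S)) \<and>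
     (\<forall>S \<sigma>. finite S \<and> inj_on \<sigma> S \<longrightarrow> lin_on scale (M S) (M (\<sigma> ` S)) (act \<sigma> S)) \<and>
     (\<forall>S \<sigma> \<sigma>'. finite S \<and> inj_on \<sigma> S \<and> (\<forall>s\<in>S. \<sigma> s = \<sigma>' s) \<longrightarrow> (\<forall>x\<in>M S. act \<sigma> S x = act \<sigma>' S x)) \<and>
     (\<forall>S. finite S \<longrightarrow> (\<forall>x\<in>M S. act id S x = x)) \<and>
     (\<forall>S \<sigma> \<rho>. finite S \<and> inj_on \<sigma> S \<and> inj_on \<rho> (\<sigma> ` S) \<longrightarrow>
        (\<forall>x\<in>M S. act (\<rho> \<circ> \<sigma>) S x = act \<rho> (\<sigma> ` S) (act \<sigma> S x)))"

definition PM_elem :: "('u set \<Rightarrow> 'm::zero set) \<Rightarrow> 'u set \<Rightarrow> ('u set \<Rightarrow> 'm) \<Rightarrow> bool"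
  where "PM_elem M S f \<longleftrightarrow> (\<forall>B. if B \<subseteq> S then f B \<in> M (S - B) else f B = 0)"

definition PPM_elem :: "('u set \<Rightarrow> 'm::zero set) \<Rightarrow> 'u set \<Rightarrow> ('u set \<Rightarrow> 'u set \<Rightarrow> 'm) \<Rightarrow> bool"
  where "PPM_elem M S g \<longleftrightarrow> (\<forall>B1 B2. if B1 \<subseteq> S \<and> B2 \<subseteq> S \<and> B1 \<inter> B2 = {}
      then g B1 B2 \<in> M (S - B1 - B2) else g B1 B2 = 0)"

definition single :: "'u set \<Rightarrow> 'm::zero \<Rightarrow> 'u set \<Rightarrow> 'm"
  where "single B x = (\<lambda>B'. if B' = B then x else 0)"

definition PM_linear_endo ::
  "('k::comm_ring_1 \<Rightarrow> 'm::ab_group_add \<Rightarrow> 'm) \<Rightarrow> ('u set \<Rightarrow> 'm set) \<Rightarrow> ('u set \<Rightarrow> ('u set \<Rightarrow> 'm) \<Rightarrow> 'u set \<Rightarrow> 'm) \<Rightarrow> bool"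
  where "PM_linear_endo scale M a \<longleftrightarrow> (\<forall>S. finite S \<longrightarrow>
     (\<forall>f. PM_elem M S f \<longrightarrow> PM_elem M S (a S f)) \<and>
     (\<forall>f g. PM_elem M S f \<and> PM_elem M S g \<longrightarrow> a S (\<lambda>B. f B + g B) = (\<lambda>A. a S f A + a S g A)) \<and>
     (\<forall>c f. PM_elem M S f \<longrightarrow> a S (\<lambda>B. scale c (f B)) = (\<lambda>A. scale c (a S f A))))"

definition assoc_op ::
  "('u set \<Rightarrow> 'm::zero set) \<Rightarrow> ('u set \<Rightarrow> ('u set \<Rightarrow> 'm) \<Rightarrow> 'u set \<Rightarrow> 'm) \<Rightarrow> ('u set \<Rightarrow> 'u set \<Rightarrow> 'u set \<Rightarrow> 'm \<Rightarrow> 'm) \<Rightarrow> bool"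
  where "assoc_op M a \<phi> \<longleftrightarrow> (\<forall>S B x. finite S \<and> B \<subseteq> S \<and> x \<in> M (S - B) \<longrightarrow>
      a S (single B x) = (\<lambda>A. if A \<subseteq> S then \<phi> S A B x else 0))"

definition natural_op ::
  "('u set \<Rightarrow> 'm set) \<Rightarrow> (('u \<Rightarrow> 'u) \<Rightarrow> 'u set \<Rightarrow> 'm \<Rightarrow> 'm) \<Rightarrow> ('u set \<Rightarrow> 'u set \<Rightarrow> 'u set \<Rightarrow> 'm \<Rightarrow> 'm) \<Rightarrow> bool"
  where "natural_op M act \<phi> \<longleftrightarrow> (\<forall>S \<sigma> A B. finite S \<and> inj_on \<sigma> S \<and> A \<subseteq> S \<and> B \<subseteq> S \<longrightarrow>
      (\<forall>x\<in>M (S - B). act \<sigma> (S - A) (\<phi> S A B x) = \<phi> (\<sigma> ` S) (\<sigma> ` A) (\<sigma> ` B) (act \<sigma> (S - B) x)))"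

text \<open>id_P (x) a on (P (x) P (x) M)(S) = (+)_{B1} t^B1 (x) (P (x) M)(S - B1).\<close>
definition a2 :: "('u set \<Rightarrow> ('u set \<Rightarrow> 'm::zero) \<Rightarrow> 'u set \<Rightarrow> 'm) \<Rightarrow> 'u set \<Rightarrow> ('u set \<Rightarrow> 'u set \<Rightarrow> 'm) \<Rightarrow> 'u set \<Rightarrow> 'u set \<Rightarrow> 'm"
  where "a2 a S g = (\<lambda>B1 B2. if B1 \<subseteq> S then a (S - B1) (g B1) B2 else 0)"

definition tau :: "('u set \<Rightarrow> 'u set \<Rightarrow> 'm) \<Rightarrow> 'u set \<Rightarrow> 'u set \<Rightarrow> 'm"
  where "tau g = (\<lambda>B1 B2. g B2 B1)"

definition a1 :: "('u set \<Rightarrow> ('u set \<Rightarrow> 'm::zero) \<Rightarrow> 'u set \<Rightarrow> 'm) \<Rightarrow> 'u set \<Rightarrow> ('u set \<Rightarrow> 'u set \<Rightarrow> 'm) \<Rightarrow> 'u set \<Rightarrow> 'u set \<Rightarrow> 'm"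
  where "a1 a S g = tau (a2 a S (tau g))"

text \<open>id (x) Delta (x) id : P(x)P(x)M -> P(x)P(x)P(x)M.\<close>
definition Delta_mid :: "('u set \<Rightarrow> 'u set \<Rightarrow> 'm::zero) \<Rightarrow> 'u set \<Rightarrow> 'u set \<Rightarrow> 'u set \<Rightarrow> 'm"
  where "Delta_mid g = (\<lambda>B U V. if U \<inter> V = {} then g B (U \<union> V) else 0)"

definition tau_fst :: "('u set \<Rightarrow> 'u set \<Rightarrow> 'u set \<Rightarrow> 'm) \<Rightarrow> 'u set \<Rightarrow> 'u set \<Rightarrow> 'u set \<Rightarrow> 'm"
  where "tau_fst h = (\<lambda>X Y Z. h Y X Z)"

text \<open>id (x) m (x) id and m (x) id (x) id : P(x)P(x)P(x)M -> P(x)P(x)M.\<close>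
definition m_mid :: "('u set \<Rightarrow> 'u set \<Rightarrow> 'u set \<Rightarrow> 'm::comm_monoid_add) \<Rightarrow> 'u set \<Rightarrow> 'u set \<Rightarrow> 'm"
  where "m_mid h = (\<lambda>X Y. \<Sum>V\<in>Pow Y. h X (Y - V) V)"

definition m_fst :: "('u set \<Rightarrow> 'u set \<Rightarrow> 'u set \<Rightarrow> 'm::comm_monoid_add) \<Rightarrow> 'u set \<Rightarrow> 'u set \<Rightarrow> 'm"
  where "m_fst h = (\<lambda>Y Z. \<Sum>V\<in>Pow Y. h (Y - V) V Z)"

definition a_prime :: "('u set \<Rightarrow> ('u set \<Rightarrow> 'm::comm_monoid_add) \<Rightarrow> 'u set \<Rightarrow> 'm) \<Rightarrow> 'u set \<Rightarrow> ('u set \<Rightarrow> 'u set \<Rightarrow> 'm) \<Rightarrow> 'u set \<Rightarrow> 'u set \<Rightarrow> 'm"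
  where "a_prime a S g = m_fst (Delta_mid (a2 a S (m_mid (tau_fst (Delta_mid g)))))"

definition a_dprime :: "('u set \<Rightarrow> ('u set \<Rightarrow> 'm::comm_monoid_add) \<Rightarrow> 'u set \<Rightarrow> 'm) \<Rightarrow> 'u set \<Rightarrow> ('u set \<Rightarrow> 'u set \<Rightarrow> 'm) \<Rightarrow> 'u set \<Rightarrow> 'u set \<Rightarrow> 'm"
  where "a_dprime a S g = tau (a_prime a S (tau g))"

definition is_weyl_rep :: "('u set \<Rightarrow> 'm::ab_group_add set) \<Rightarrow> ('u set \<Rightarrow> ('u set \<Rightarrow> 'm) \<Rightarrow> 'u set \<Rightarrow> 'm) \<Rightarrow> bool"
  where "is_weyl_rep M a \<longleftrightarrow> (\<forall>S g. finite S \<and> PPM_elem M S g \<longrightarrow>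
      (\<forall>B1 B2. a1 a S (a2 a S g) B1 B2 - a2 a S (a1 a S g) B1 B2
             = a_prime a S g B1 B2 - a_dprime a S g B1 B2))"

definition cond_B1 :: "('u set \<Rightarrow> 'm set) \<Rightarrow> ('u set \<Rightarrow> 'u set \<Rightarrow> 'u set \<Rightarrow> 'm \<Rightarrow> 'm) \<Rightarrow> bool"
  where "cond_B1 M \<phi> \<longleftrightarrow> (\<forall>S A B C D. finite S \<and> A \<subseteq> S \<and> B \<subseteq> S \<and> C \<subseteq> S \<and> D \<subseteq> S \<and>
      A \<inter> B = {} \<and> C \<inter> D = {} \<and> A \<inter> C = {} \<and> B \<inter> D = {} \<longrightarrow>
      (\<forall>x\<in>M (S - A - B). \<phi> (S - C) D A (\<phi> (S - A) C B x) = \<phi> (S - D) C B (\<phi> (S - B) D A x)))"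

definition cond_B2 :: "('u set \<Rightarrow> 'm::comm_monoid_add set) \<Rightarrow> ('u set \<Rightarrow> 'u set \<Rightarrow> 'u set \<Rightarrow> 'm \<Rightarrow> 'm) \<Rightarrow> bool"
  where "cond_B2 M \<phi> \<longleftrightarrow> (\<forall>S A B C D. finite S \<and> A \<subseteq> S \<and> B \<subseteq> S \<and> C \<subseteq> S \<and> D \<subseteq> S \<and>
      A \<inter> B = {} \<and> C \<inter> D = {} \<and> A \<inter> C = {} \<and> B \<inter> D \<noteq> {} \<longrightarrow>
      (\<forall>x\<in>M (S - A - B). \<phi> (S - C) D A (\<phi> (S - A) C B x) =
         (\<Sum>X\<in>Pow (B \<inter> D) - {{}}. \<phi> (S - X) ((D - X) \<union> C) (A \<union> (B - X)) x)))"

definition cond_B3 :: "('u set \<Rightarrow> 'm::comm_monoid_add set) \<Rightarrow> ('u set \<Rightarrow> 'u set \<Rightarrow> 'u set \<Rightarrow> 'm \<Rightarrow> 'm) \<Rightarrow> bool"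
  where "cond_B3 M \<phi> \<longleftrightarrow> (\<forall>S A B C D. finite S \<and> A \<subseteq> S \<and> B \<subseteq> S \<and> C \<subseteq> S \<and> D \<subseteq> S \<and>
      A \<inter> B = {} \<and> C \<inter> D = {} \<and> A \<inter> C \<noteq> {} \<and> B \<inter> D \<noteq> {} \<longrightarrow>
      (\<forall>x\<in>M (S - A - B).
         (\<Sum>X\<in>Pow (B \<inter> D). \<phi> (S - X) ((D - X) \<union> C) (A \<union> (B - X)) x) =
         (\<Sum>X\<in>Pow (A \<inter> C). \<phi> (S - X) ((C - X) \<union> D) (B \<union> (A - X)) x)))"

end

theory Submission
  imports Defs
begin

text \<open>
  Both sides of [a1, a2] = a' - a'' are additive in their argument, so the identity only has to
  be checked on pure tensors t^A (x) t^B (x) x. There the coefficient of t^D (x) t^C of the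
  difference is an explicit expression in \<phi>. Its two sums have the same term
  for X = {}, and exchanging (A, C) with (B, D) changes its sign; so its vanishing is (B1), (B2)
  or (B3) according to which of A \<inter> C and B \<inter> D are empty, the case A \<inter> C \<noteq> {} = B \<inter> D being
  (B2) for the exchanged data.
\<close>

definition single2 :: "'u set \<Rightarrow> 'u set \<Rightarrow> 'm::zero \<Rightarrow> 'u set \<Rightarrow> 'u set \<Rightarrow> 'm"
  where "single2 P Q x = (\<lambda>B1 B2. if B1 = P \<and> B2 = Q then x else 0)"

definition shift_split :: "('u set \<Rightarrow> 'u set \<Rightarrow> 'm::comm_monoid_add) \<Rightarrow> 'u set \<Rightarrow> 'u set \<Rightarrow> 'm"
  where "shift_split g = m_mid (tau_fst (Delta_mid g))"

definition weyl_defect ::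
  "('u set \<Rightarrow> ('u set \<Rightarrow> 'm::ab_group_add) \<Rightarrow> 'u set \<Rightarrow> 'm) \<Rightarrow> 'u set \<Rightarrow> ('u set \<Rightarrow> 'u set \<Rightarrow> 'm) \<Rightarrow> 'u set \<Rightarrow> 'u set \<Rightarrow> 'm"
  where "weyl_defect a S g B1 B2 =
    a1 a S (a2 a S g) B1 B2 - a2 a S (a1 a S g) B1 B2 - (a_prime a S g B1 B2 - a_dprime a S g B1 B2)"

definition B_defect ::
  "('u set \<Rightarrow> 'u set \<Rightarrow> 'u set \<Rightarrow> 'm \<Rightarrow> 'm::ab_group_add) \<Rightarrow> 'u set \<Rightarrow> 'u set \<Rightarrow> 'u set \<Rightarrow> 'u set \<Rightarrow> 'u set \<Rightarrow> 'm \<Rightarrow> 'm"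
  where "B_defect \<phi> S A B C D x =
    (if A \<inter> C = {} then \<phi> (S - C) D A (\<phi> (S - A) C B x) else 0)
    - (if B \<inter> D = {} then \<phi> (S - D) C B (\<phi> (S - B) D A x) else 0)
    - (\<Sum>X\<in>Pow (B \<inter> D). \<phi> (S - X) ((D - X) \<union> C) (A \<union> (B - X)) x)
    + (\<Sum>X\<in>Pow (A \<inter> C). \<phi> (S - X) ((C - X) \<union> D) (B \<union> (A - X)) x)"

definition B_defect_vanishes :: "('u set \<Rightarrow> 'm set) \<Rightarrow> ('u set \<Rightarrow> 'u set \<Rightarrow> 'u set \<Rightarrow> 'm \<Rightarrow> 'm::ab_group_add) \<Rightarrow> bool"
  where "B_defect_vanishes M \<phi> \<longleftrightarrow> (\<forall>S A B C D x. finite S \<and> A \<subseteq> S \<and> B \<subseteq> S \<and> C \<subseteq> S \<and> D \<subseteq> S \<and>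
      A \<inter> B = {} \<and> C \<inter> D = {} \<and> x \<in> M (S - A - B) \<longrightarrow> B_defect \<phi> S A B C D x = 0)"

definition disjoint_pairs :: "'a set \<Rightarrow> ('a set \<times> 'a set) set"
  where "disjoint_pairs S = {(P, Q). P \<subseteq> S \<and> Q \<subseteq> S \<and> P \<inter> Q = {}}"

lemma finite_disjoint_pairs: "finite S \<Longrightarrow> finite (disjoint_pairs S)"
  unfolding disjoint_pairs_def by (rule finite_subset[of _ "Pow S \<times> Pow S"]) auto

lemma B_defect_vanishesD:
  "B_defect_vanishes M \<phi> \<Longrightarrow> finite S \<Longrightarrow> A \<subseteq> S \<Longrightarrow> B \<subseteq> S \<Longrightarrow> C \<subseteq> S \<Longrightarrow> D \<subseteq> S \<Longrightarrow>
    A \<inter> B = {} \<Longrightarrow> C \<inter> D = {} \<Longrightarrow> x \<in> M (S - A - B) \<Longrightarrow> B_defect \<phi> S A B C D x = 0"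
  unfolding B_defect_vanishes_def by blast

lemma diff_swap: "(S::'a set) - A - B = S - B - A"
  by blast

lemma tau_tau [simp]: "tau (tau g) = g"
  unfolding tau_def ..

lemma tau_single2: "tau (single2 P Q x) = single2 Q P x"
  unfolding tau_def single2_def by (intro ext) auto

lemma tau_add: "tau (\<lambda>X Y. g1 X Y + g2 X Y) = (\<lambda>X Y. tau g1 X Y + tau g2 X Y)"
  unfolding tau_def ..

lemma shift_split_eq: "shift_split g X Y = (\<Sum>V\<in>Pow Y. if X \<inter> V = {} then g (Y - V) (X \<union> V) else 0)"
  unfolding shift_split_def m_mid_def tau_fst_def Delta_mid_def by simp

lemma shift_split_add: "shift_split (\<lambda>X Y. g1 X Y + g2 X Y) = (\<lambda>X Y. shift_split g1 X Y + shift_split g2 X Y)"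
  by (intro ext) (auto simp: shift_split_eq sum.distrib[symmetric] intro!: sum.cong)

lemma m_fst_Delta_mid_add:
  "m_fst (Delta_mid (\<lambda>X Y. g1 X Y + g2 X Y)) = (\<lambda>X Y. m_fst (Delta_mid g1) X Y + m_fst (Delta_mid g2) X Y)"
  unfolding m_fst_def Delta_mid_def by (intro ext) (auto simp: sum.distrib[symmetric] intro!: sum.cong)

lemma m_fst_Delta_mid_eq:
  "m_fst (Delta_mid h) Y Z = (\<Sum>U\<in>Pow Y. if (Y - U) \<inter> Z = {} then h U ((Y - U) \<union> Z) else 0)"
  unfolding m_fst_def Delta_mid_def
  by (rule sum.reindex_bij_witness[where i = "\<lambda>U. Y - U" and j = "\<lambda>V. Y - V"])
    (auto simp: Diff_Diff_Int Int_absorb1)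

lemma shift_split_single2:
  assumes "finite P" "finite Q" "P \<inter> Q = {}"
  shows "shift_split (single2 P Q x) X Y = (if X \<subseteq> Q \<and> Y = P \<union> (Q - X) then x else 0)"
proof (cases "finite Y")
  case True
  let ?c = "if X \<subseteq> Q \<and> Y = P \<union> (Q - X) then x else 0"
  have "shift_split (single2 P Q x) X Y = (\<Sum>V\<in>Pow Y. if V = Q - X then ?c else 0)"
    unfolding shift_split_eq single2_def
  proof (intro sum.cong refl)
    fix V assume "V \<in> Pow Y"
    then have "(X \<inter> V = {} \<and> Y - V = P \<and> X \<union> V = Q) \<longleftrightarrow> (V = Q - X \<and> X \<subseteq> Q \<and> Y = P \<union> (Q - X))"
      using assms(3) by (simp add: Pow_iff) blast
    then show "(if X \<inter> V = {} then if Y - V = P \<and> X \<union> V = Q then x else 0 else 0) = (if V = Q - X then ?c else 0)"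
      by argo
  qed
  also have "\<dots> = ?c"
    using True by simp
  finally show ?thesis .
next
  case False
  then show ?thesis
    using assms by (auto simp: shift_split_eq)
qed

lemma PM_elem_mem: "PM_elem M S f \<Longrightarrow> B \<subseteq> S \<Longrightarrow> f B \<in> M (S - B)"
  unfolding PM_elem_def by metis

lemma PM_elem_outside: "PM_elem M S f \<Longrightarrow> \<not> B \<subseteq> S \<Longrightarrow> f B = 0"
  unfolding PM_elem_def by metis

lemma PPM_elemI:
  assumes "\<And>B1 B2. B1 \<subseteq> S \<Longrightarrow> B2 \<subseteq> S \<Longrightarrow> B1 \<inter> B2 = {} \<Longrightarrow> g B1 B2 \<in> M (S - B1 - B2)"
    and "\<And>B1 B2. \<not> (B1 \<subseteq> S \<and> B2 \<subseteq> S \<and> B1 \<inter> B2 = {}) \<Longrightarrow> g B1 B2 = 0"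
  shows "PPM_elem M S g"
  unfolding PPM_elem_def using assms by simp

lemma PPM_elem_mem:
  "PPM_elem M S g \<Longrightarrow> B1 \<subseteq> S \<Longrightarrow> B2 \<subseteq> S \<Longrightarrow> B1 \<inter> B2 = {} \<Longrightarrow> g B1 B2 \<in> M (S - B1 - B2)"
  unfolding PPM_elem_def by metis

lemma PPM_elem_outside:
  "PPM_elem M S g \<Longrightarrow> \<not> (B1 \<subseteq> S \<and> B2 \<subseteq> S \<and> B1 \<inter> B2 = {}) \<Longrightarrow> g B1 B2 = 0"
  unfolding PPM_elem_def by metis

lemma PPM_elem_tau:
  assumes "PPM_elem M S g"
  shows "PPM_elem M S (tau g)"
proof (rule PPM_elemI)
  fix B1 B2 assume "B1 \<subseteq> S" "B2 \<subseteq> S" "B1 \<inter> B2 = {}"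
  then show "tau g B1 B2 \<in> M (S - B1 - B2)"
    using PPM_elem_mem[OF assms, of B2 B1] by (simp add: tau_def diff_swap Int_commute)
next
  fix B1 B2 assume "\<not> (B1 \<subseteq> S \<and> B2 \<subseteq> S \<and> B1 \<inter> B2 = {})"
  then show "tau g B1 B2 = 0"
    using PPM_elem_outside[OF assms, of B2 B1] by (auto simp: tau_def)
qed

lemma PM_elem_row: "PPM_elem M S g \<Longrightarrow> B1 \<subseteq> S \<Longrightarrow> PM_elem M (S - B1) (g B1)"
  unfolding PM_elem_def by (auto intro: PPM_elem_mem PPM_elem_outside)

lemma PPM_elem_eq_sum_single2:
  assumes "finite S" "PPM_elem M S g"
  shows "g = (\<lambda>X Y. \<Sum>(P, Q)\<in>disjoint_pairs S. single2 P Q (g P Q) X Y)"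
proof (intro ext)
  fix X Y
  have "(\<Sum>(P, Q)\<in>disjoint_pairs S. single2 P Q (g P Q) X Y) = (\<Sum>p\<in>disjoint_pairs S. if (X, Y) = p then g X Y else 0)"
    by (intro sum.cong refl) (simp add: single2_def split: prod.split)
  also have "\<dots> = g X Y"
    using finite_disjoint_pairs[OF assms(1)] PPM_elem_outside[OF assms(2), of X Y]
    by (auto simp: disjoint_pairs_def)
  finally show "g X Y = (\<Sum>(P, Q)\<in>disjoint_pairs S. single2 P Q (g P Q) X Y)" ..
qed

locale PM_endo =
  fixes M :: "'u set \<Rightarrow> 'm::ab_group_add set"
    and a :: "'u set \<Rightarrow> ('u set \<Rightarrow> 'm) \<Rightarrow> 'u set \<Rightarrow> 'm"
    and \<phi> :: "'u set \<Rightarrow> 'u set \<Rightarrow> 'u set \<Rightarrow> 'm \<Rightarrow> 'm"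
  assumes zero_mem: "finite T \<Longrightarrow> 0 \<in> M T"
    and add_mem: "finite T \<Longrightarrow> x \<in> M T \<Longrightarrow> y \<in> M T \<Longrightarrow> x + y \<in> M T"
    and a_closed: "finite S \<Longrightarrow> PM_elem M S f \<Longrightarrow> PM_elem M S (a S f)"
    and a_add: "finite S \<Longrightarrow> PM_elem M S f \<Longrightarrow> PM_elem M S g \<Longrightarrow>
        a S (\<lambda>B. f B + g B) = (\<lambda>A. a S f A + a S g A)"
    and assoc: "assoc_op M a \<phi>"
begin

lemma sum_mem:
  assumes "finite T" "\<And>i. i \<in> I \<Longrightarrow> f i \<in> M T"
  shows "sum f I \<in> M T"
  using assms(2) by (induction I rule: infinite_finite_induct) (auto intro: zero_mem add_mem assms(1))

lemma PM_elem_zero: "finite S \<Longrightarrow> PM_elem M S (\<lambda>_. 0)"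
  unfolding PM_elem_def using zero_mem by auto

lemma PM_elem_single: "finite S \<Longrightarrow> B \<subseteq> S \<Longrightarrow> x \<in> M (S - B) \<Longrightarrow> PM_elem M S (single B x)"
  unfolding PM_elem_def single_def using zero_mem by auto

lemma PPM_elem_single2:
  "finite S \<Longrightarrow> A \<subseteq> S \<Longrightarrow> B \<subseteq> S \<Longrightarrow> A \<inter> B = {} \<Longrightarrow> x \<in> M (S - A - B) \<Longrightarrow> PPM_elem M S (single2 A B x)"
  unfolding PPM_elem_def single2_def using zero_mem by auto

lemma PPM_elem_sum:
  assumes "finite S" "\<And>i. i \<in> I \<Longrightarrow> PPM_elem M S (f i)"
  shows "PPM_elem M S (\<lambda>X Y. \<Sum>i\<in>I. f i X Y)"
proof (rule PPM_elemI)
  fix B1 B2 assume "B1 \<subseteq> S" "B2 \<subseteq> S" "B1 \<inter> B2 = {}"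
  then show "(\<Sum>i\<in>I. f i B1 B2) \<in> M (S - B1 - B2)"
    using assms by (intro sum_mem) (auto intro: PPM_elem_mem)
next
  fix B1 B2 assume "\<not> (B1 \<subseteq> S \<and> B2 \<subseteq> S \<and> B1 \<inter> B2 = {})"
  then show "(\<Sum>i\<in>I. f i B1 B2) = 0"
    using PPM_elem_outside[OF assms(2)] by (simp add: sum.neutral)
qed

lemma a_zero:
  assumes "finite S"
  shows "a S (\<lambda>_. 0) = (\<lambda>_. 0)"
proof -
  have "a S (\<lambda>_. 0) = (\<lambda>A. a S (\<lambda>_. 0) A + a S (\<lambda>_. 0) A)"
    using a_add[OF assms PM_elem_zero[OF assms] PM_elem_zero[OF assms]] by simp
  then show ?thesis
    by (metis add_cancel_right_right)
qed

lemma a_single: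
  "finite S \<Longrightarrow> B \<subseteq> S \<Longrightarrow> x \<in> M (S - B) \<Longrightarrow> a S (single B x) A = (if A \<subseteq> S then \<phi> S A B x else 0)"
  using assoc unfolding assoc_op_def by auto

lemma phi_mem:
  assumes "finite S" "B \<subseteq> S" "x \<in> M (S - B)" "A \<subseteq> S"
  shows "\<phi> S A B x \<in> M (S - A)"
  using a_closed[OF assms(1) PM_elem_single[OF assms(1-3)]] a_single[OF assms(1-3)] assms(4)
  unfolding PM_elem_def by metis

lemma PPM_elem_a2:
  assumes "finite S" "PPM_elem M S g"
  shows "PPM_elem M S (a2 a S g)"
proof -
  have row: "PM_elem M (S - B1) (a (S - B1) (g B1))" if "B1 \<subseteq> S" for B1
    using a_closed PM_elem_row[OF assms(2) that] assms(1) by simp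
  show ?thesis
  proof (rule PPM_elemI)
    fix B1 B2 assume "B1 \<subseteq> S" "B2 \<subseteq> S" "B1 \<inter> B2 = {}"
    moreover from this have "B2 \<subseteq> S - B1"
      by blast
    ultimately show "a2 a S g B1 B2 \<in> M (S - B1 - B2)"
      using PM_elem_mem[OF row] by (simp add: a2_def)
  next
    fix B1 B2 assume "\<not> (B1 \<subseteq> S \<and> B2 \<subseteq> S \<and> B1 \<inter> B2 = {})"
    then show "a2 a S g B1 B2 = 0"
      using PM_elem_outside[OF row, of B1 B2] by (auto simp: a2_def)
  qed
qed

lemma PPM_elem_a1: "finite S \<Longrightarrow> PPM_elem M S g \<Longrightarrow> PPM_elem M S (a1 a S g)"
  unfolding a1_def by (intro PPM_elem_tau PPM_elem_a2)

lemma PPM_elem_shift_split: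
  assumes "finite S" "PPM_elem M S g"
  shows "PPM_elem M S (shift_split g)"
proof (rule PPM_elemI)
  fix X Y assume XY: "X \<subseteq> S" "Y \<subseteq> S" "X \<inter> Y = {}"
  show "shift_split g X Y \<in> M (S - X - Y)"
    unfolding shift_split_eq
  proof (intro sum_mem)
    fix V assume "V \<in> Pow Y"
    then have "S - (Y - V) - (X \<union> V) = S - X - Y" "Y - V \<subseteq> S" "X \<union> V \<subseteq> S" "(Y - V) \<inter> (X \<union> V) = {}"
      using XY by blast+
    then show "(if X \<inter> V = {} then g (Y - V) (X \<union> V) else 0) \<in> M (S - X - Y)"
      using PPM_elem_mem[OF assms(2), of "Y - V" "X \<union> V"] zero_mem assms(1) by simp
  qed (use assms(1) in simp)
next
  fix X Y assume XY: "\<not> (X \<subseteq> S \<and> Y \<subseteq> S \<and> X \<inter> Y = {})"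
  show "shift_split g X Y = 0"
    unfolding shift_split_eq
  proof (intro sum.neutral ballI)
    fix V assume "V \<in> Pow Y"
    then have "X \<inter> V = {} \<Longrightarrow> \<not> (Y - V \<subseteq> S \<and> X \<union> V \<subseteq> S \<and> (Y - V) \<inter> (X \<union> V) = {})"
      using XY by blast
    then show "(if X \<inter> V = {} then g (Y - V) (X \<union> V) else 0) = 0"
      using PPM_elem_outside[OF assms(2)] by simp
  qed
qed

lemma a2_add:
  assumes "finite S" "PPM_elem M S g1" "PPM_elem M S g2"
  shows "a2 a S (\<lambda>X Y. g1 X Y + g2 X Y) = (\<lambda>X Y. a2 a S g1 X Y + a2 a S g2 X Y)"
proof (intro ext)
  fix X Y
  show "a2 a S (\<lambda>X Y. g1 X Y + g2 X Y) X Y = a2 a S g1 X Y + a2 a S g2 X Y"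
    using a_add[OF _ PM_elem_row[OF assms(2)] PM_elem_row[OF assms(3)]] assms(1)
    by (simp add: a2_def)
qed

lemma a1_add:
  assumes "finite S" "PPM_elem M S g1" "PPM_elem M S g2"
  shows "a1 a S (\<lambda>X Y. g1 X Y + g2 X Y) = (\<lambda>X Y. a1 a S g1 X Y + a1 a S g2 X Y)"
  unfolding a1_def tau_add a2_add[OF assms(1) PPM_elem_tau[OF assms(2)] PPM_elem_tau[OF assms(3)]]
  by (simp add: tau_def)

lemma a_prime_add:
  assumes "finite S" "PPM_elem M S g1" "PPM_elem M S g2"
  shows "a_prime a S (\<lambda>X Y. g1 X Y + g2 X Y) = (\<lambda>X Y. a_prime a S g1 X Y + a_prime a S g2 X Y)"
  unfolding a_prime_def shift_split_def[symmetric] shift_split_add m_fst_Delta_mid_add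
    a2_add[OF assms(1) PPM_elem_shift_split[OF assms(1,2)] PPM_elem_shift_split[OF assms(1,3)]] ..

lemma a_dprime_add:
  assumes "finite S" "PPM_elem M S g1" "PPM_elem M S g2"
  shows "a_dprime a S (\<lambda>X Y. g1 X Y + g2 X Y) = (\<lambda>X Y. a_dprime a S g1 X Y + a_dprime a S g2 X Y)"
  unfolding a_dprime_def tau_add a_prime_add[OF assms(1) PPM_elem_tau[OF assms(2)] PPM_elem_tau[OF assms(3)]]
  by (simp add: tau_def)

lemma weyl_defect_add:
  assumes "finite S" "PPM_elem M S g1" "PPM_elem M S g2"
  shows "weyl_defect a S (\<lambda>X Y. g1 X Y + g2 X Y) B1 B2 = weyl_defect a S g1 B1 B2 + weyl_defect a S g2 B1 B2"
  using assms
  by (simp add: weyl_defect_def a1_add a2_add PPM_elem_a1 PPM_elem_a2 a_prime_add a_dprime_add algebra_simps)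

lemma weyl_defect_zero:
  assumes "finite S"
  shows "weyl_defect a S (\<lambda>_ _. 0) B1 B2 = 0"
proof -
  have "PPM_elem M S (\<lambda>_ _. 0)"
    by (rule PPM_elemI) (simp_all add: zero_mem assms)
  then show ?thesis
    using weyl_defect_add[of S "\<lambda>_ _. 0" "\<lambda>_ _. 0" B1 B2] assms by simp
qed

lemma weyl_defect_sum:
  assumes "finite S" "finite I" "\<And>i. i \<in> I \<Longrightarrow> PPM_elem M S (f i)"
  shows "weyl_defect a S (\<lambda>X Y. \<Sum>i\<in>I. f i X Y) B1 B2 = (\<Sum>i\<in>I. weyl_defect a S (f i) B1 B2)"
  using assms(2,3)
proof (induction I rule: finite_induct)
  case empty
  show ?case
    using weyl_defect_zero[OF assms(1)] by simp
next
  case (insert i I)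
  then show ?case
    using weyl_defect_add[OF assms(1) _ PPM_elem_sum[OF assms(1)], of "f i" I] by simp
qed

lemma a2_single2:
  assumes "finite S" "A \<subseteq> S" "B \<subseteq> S" "A \<inter> B = {}" "x \<in> M (S - A - B)"
  shows "a2 a S (single2 A B x) B1 B2 = (if B1 = A \<and> B2 \<subseteq> S - A then \<phi> (S - A) B2 B x else 0)"
proof (cases "B1 = A")
  case True
  have "single2 A B x A = single B x"
    unfolding single2_def single_def by auto
  moreover have "B \<subseteq> S - A" "x \<in> M (S - A - B)"
    using assms by auto
  ultimately show ?thesis
    using True assms(1,2) a_single[of "S - A" B x B2] by (simp add: a2_def)
next
  case False
  then have "single2 A B x B1 = (\<lambda>_. 0)"
    unfolding single2_def by auto
  then show ?thesis
    using False a_zero[of "S - B1"] assms(1) by (simp add: a2_def)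
qed

lemma a1_a2_single2:
  assumes "finite S" "A \<subseteq> S" "B \<subseteq> S" "A \<inter> B = {}" "x \<in> M (S - A - B)"
  shows "a1 a S (a2 a S (single2 A B x)) D C =
    (if C \<subseteq> S \<and> C \<inter> A = {} \<and> D \<subseteq> S - C then \<phi> (S - C) D A (\<phi> (S - A) C B x) else 0)"
proof -
  have row: "tau (a2 a S (single2 A B x)) C = (\<lambda>B1. if B1 = A \<and> C \<subseteq> S - A then \<phi> (S - A) C B x else 0)"
    using a2_single2[OF assms] by (simp add: tau_def)
  show ?thesis
  proof (cases "C \<subseteq> S - A")
    case True
    have "B \<subseteq> S - A"
      using assms(3,4) by blast
    then have "\<phi> (S - A) C B x \<in> M (S - C - A)"
      using phi_mem[of "S - A" B x C] True assms(1,5) by (simp add: diff_swap)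
    moreover have "A \<subseteq> S - C"
      using True assms(2) by blast
    ultimately show ?thesis
      using True assms(1) a_single[of "S - C" A "\<phi> (S - A) C B x" D] row
      by (auto simp: a1_def a2_def tau_def single_def)
  next
    case False
    then show ?thesis
      using assms(1) a_zero[of "S - C"] row by (auto simp: a1_def a2_def tau_def)
  qed
qed

lemma a2_a1_single2:
  assumes "finite S" "A \<subseteq> S" "B \<subseteq> S" "A \<inter> B = {}" "x \<in> M (S - A - B)"
  shows "a2 a S (a1 a S (single2 A B x)) D C =
    (if D \<subseteq> S \<and> D \<inter> B = {} \<and> C \<subseteq> S - D then \<phi> (S - D) C B (\<phi> (S - B) D A x) else 0)"
proof -
  have "a2 a S (a1 a S (single2 A B x)) = tau (a1 a S (a2 a S (single2 B A x)))"
    by (simp add: a1_def tau_single2)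
  then show ?thesis
    using a1_a2_single2[of S B A x C D] assms by (simp add: tau_def Int_commute diff_swap)
qed

lemma a2_shift_split_single2:
  assumes "finite S" "A \<subseteq> S" "B \<subseteq> S" "A \<inter> B = {}" "x \<in> M (S - A - B)"
  shows "a2 a S (shift_split (single2 A B x)) U E =
    (if U \<subseteq> B \<and> E \<subseteq> S - U then \<phi> (S - U) E (A \<union> (B - U)) x else 0)"
proof -
  have fin: "finite A" "finite B"
    using assms(1-3) finite_subset by auto
  show ?thesis
  proof (cases "U \<subseteq> B")
    case True
    have "shift_split (single2 A B x) U = single (A \<union> (B - U)) x"
      by (rule ext) (simp add: shift_split_single2[OF fin assms(4)] True single_def)
    moreover have "A \<union> (B - U) \<subseteq> S - U" "S - U - (A \<union> (B - U)) = S - A - B"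
      using True assms(2-4) by blast+
    ultimately show ?thesis
      using True assms a_single[of "S - U" "A \<union> (B - U)" x E] by (auto simp: a2_def)
  next
    case False
    then have "shift_split (single2 A B x) U = (\<lambda>_. 0)"
      by (intro ext) (simp add: shift_split_single2[OF fin assms(4)])
    then show ?thesis
      using False a_zero[of "S - U"] assms(1) by (simp add: a2_def)
  qed
qed

lemma a_prime_single2:
  assumes "finite S" "A \<subseteq> S" "B \<subseteq> S" "A \<inter> B = {}" "x \<in> M (S - A - B)"
  shows "a_prime a S (single2 A B x) D C =
    (if D \<subseteq> S \<and> C \<subseteq> S \<and> D \<inter> C = {}
     then \<Sum>X\<in>Pow (B \<inter> D). \<phi> (S - X) ((D - X) \<union> C) (A \<union> (B - X)) x else 0)"
proof -
  let ?f = "\<lambda>X. \<phi> (S - X) ((D - X) \<union> C) (A \<union> (B - X)) x"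
  have expand: "a_prime a S (single2 A B x) D C = (\<Sum>X\<in>Pow D.
      if (D - X) \<inter> C = {} \<and> X \<subseteq> B \<and> (D - X) \<union> C \<subseteq> S - X then ?f X else 0)"
    unfolding a_prime_def shift_split_def[symmetric] m_fst_Delta_mid_eq a2_shift_split_single2[OF assms]
    by (intro sum.cong) auto
  show ?thesis
  proof (cases "D \<subseteq> S \<and> C \<subseteq> S \<and> D \<inter> C = {}")
    case True
    then have "finite D"
      using assms(1) finite_subset by auto
    moreover have "{X \<in> Pow D. X \<subseteq> B} = Pow (B \<inter> D)"
      by blast
    moreover have "(\<Sum>X\<in>Pow D. if (D - X) \<inter> C = {} \<and> X \<subseteq> B \<and> (D - X) \<union> C \<subseteq> S - X then ?f X else 0)
        = (\<Sum>X\<in>Pow D. if X \<subseteq> B then ?f X else 0)"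
      using True by (intro sum.cong) auto
    ultimately show ?thesis
      using True by (simp add: expand sum.inter_filter[symmetric])
  next
    case False
    have "\<not> ((D - X) \<inter> C = {} \<and> X \<subseteq> B \<and> (D - X) \<union> C \<subseteq> S - X)" if "X \<in> Pow D" for X
      using that False assms(3) by blast
    then have "a_prime a S (single2 A B x) D C = 0"
      unfolding expand by (intro sum.neutral ballI if_not_P)
    then show ?thesis
      by (simp only: if_not_P[OF False])
  qed
qed

lemma weyl_defect_single2:
  assumes "finite S" "A \<subseteq> S" "B \<subseteq> S" "A \<inter> B = {}" "x \<in> M (S - A - B)"
  shows "weyl_defect a S (single2 A B x) D C =
    (if C \<subseteq> S \<and> D \<subseteq> S \<and> C \<inter> D = {} then B_defect \<phi> S A B C D x else 0)"
proof -
  have swapped: "B \<inter> A = {}" "x \<in> M (S - B - A)"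
    using assms(4,5) by (auto simp: diff_swap)
  have "a_dprime a S (single2 A B x) D C = a_prime a S (single2 B A x) C D"
    unfolding a_dprime_def tau_single2 by (simp add: tau_def)
  then show ?thesis
    using a1_a2_single2[OF assms] a2_a1_single2[OF assms] a_prime_single2[OF assms]
      a_prime_single2[OF assms(1,3,2) swapped]
    by (auto simp: weyl_defect_def B_defect_def Int_commute)
qed

lemma weyl_defect_eq_0_if_B_defect_vanishes:
  assumes "B_defect_vanishes M \<phi>" "finite S" "PPM_elem M S g"
  shows "weyl_defect a S g D C = 0"
proof -
  have "weyl_defect a S g D C = (\<Sum>(P, Q)\<in>disjoint_pairs S. weyl_defect a S (single2 P Q (g P Q)) D C)"
    by (subst PPM_elem_eq_sum_single2[OF assms(2,3)])
      (use assms(2,3) finite_disjoint_pairs[OF assms(2)] in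
        \<open>auto simp: case_prod_beta disjoint_pairs_def intro!: weyl_defect_sum PPM_elem_single2 PPM_elem_mem\<close>)
  also have "\<dots> = 0"
    using assms by (intro sum.neutral)
      (auto simp: weyl_defect_single2 PPM_elem_mem disjoint_pairs_def intro: B_defect_vanishesD)
  finally show ?thesis .
qed

lemma weyl_rep_iff_B_defect_vanishes: "is_weyl_rep M a \<longleftrightarrow> B_defect_vanishes M \<phi>"
proof
  assume "is_weyl_rep M a"
  then have weyl: "weyl_defect a S g D C = 0" if "finite S" "PPM_elem M S g" for S g D C
    using that unfolding is_weyl_rep_def weyl_defect_def by simp
  show "B_defect_vanishes M \<phi>"
    unfolding B_defect_vanishes_def
  proof (intro allI impI, elim conjE)
    fix S A B C D x
    assume "finite S" "A \<subseteq> S" "B \<subseteq> S" "C \<subseteq> S" "D \<subseteq> S" "A \<inter> B = {}" "C \<inter> D = {}" "x \<in> M (S - A - B)"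
    then show "B_defect \<phi> S A B C D x = 0"
      using weyl[OF _ PPM_elem_single2] weyl_defect_single2[of S A B x D C] by simp
  qed
next
  assume "B_defect_vanishes M \<phi>"
  then show "is_weyl_rep M a"
    using weyl_defect_eq_0_if_B_defect_vanishes unfolding is_weyl_rep_def weyl_defect_def by simp
qed

end

lemma B_defect_swap: "B_defect \<phi> S B A D C x = - B_defect \<phi> S A B C D x"
  unfolding B_defect_def by (simp add: algebra_simps)

lemma B_defect_disjoint:
  assumes "A \<inter> C = {}" "B \<inter> D = {}"
  shows "B_defect \<phi> S A B C D x = \<phi> (S - C) D A (\<phi> (S - A) C B x) - \<phi> (S - D) C B (\<phi> (S - B) D A x)"
  using assms unfolding B_defect_def by (simp add: Un_commute)

lemma B_defect_overlap:
  assumes "A \<inter> C = {}" "B \<inter> D \<noteq> {}" "finite (B \<inter> D)"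
  shows "B_defect \<phi> S A B C D x =
    \<phi> (S - C) D A (\<phi> (S - A) C B x) - (\<Sum>X\<in>Pow (B \<inter> D) - {{}}. \<phi> (S - X) ((D - X) \<union> C) (A \<union> (B - X)) x)"
proof -
  have "(\<Sum>X\<in>Pow (B \<inter> D). \<phi> (S - X) ((D - X) \<union> C) (A \<union> (B - X)) x) =
      \<phi> S (C \<union> D) (B \<union> A) x + (\<Sum>X\<in>Pow (B \<inter> D) - {{}}. \<phi> (S - X) ((D - X) \<union> C) (A \<union> (B - X)) x)"
    using assms(3) by (subst sum.remove[of "Pow (B \<inter> D)" "{}"]) (auto simp: Un_commute simp del: Pow_Int_eq)
  then show ?thesis
    using assms(1,2) unfolding B_defect_def by simp
qed

lemma B_defect_double_overlap:
  assumes "A \<inter> C \<noteq> {}" "B \<inter> D \<noteq> {}"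
  shows "B_defect \<phi> S A B C D x =
    (\<Sum>X\<in>Pow (A \<inter> C). \<phi> (S - X) ((C - X) \<union> D) (B \<union> (A - X)) x)
    - (\<Sum>X\<in>Pow (B \<inter> D). \<phi> (S - X) ((D - X) \<union> C) (A \<union> (B - X)) x)"
  using assms unfolding B_defect_def by simp

lemma B_defect_eq_0_if_cond_B2:
  assumes "cond_B2 M \<phi>"
    and "finite S" "A \<subseteq> S" "B \<subseteq> S" "C \<subseteq> S" "D \<subseteq> S" "A \<inter> B = {}" "C \<inter> D = {}" "x \<in> M (S - A - B)"
    and overlap: "A \<inter> C = {}" "B \<inter> D \<noteq> {}"
  shows "B_defect \<phi> S A B C D x = 0"
proof -
  have "finite (B \<inter> D)"
    using assms(2,4) finite_subset by blast
  moreover have "\<phi> (S - C) D A (\<phi> (S - A) C B x) =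
      (\<Sum>X\<in>Pow (B \<inter> D) - {{}}. \<phi> (S - X) ((D - X) \<union> C) (A \<union> (B - X)) x)"
    using assms unfolding cond_B2_def by blast
  ultimately show ?thesis
    using B_defect_overlap[OF overlap, of \<phi> S x] by simp
qed

lemma B_defect_vanishes_if_conditions:
  assumes B1: "cond_B1 M \<phi>" and B2: "cond_B2 M \<phi>" and B3: "cond_B3 M \<phi>"
  shows "B_defect_vanishes M \<phi>"
proof -
  show ?thesis
    unfolding B_defect_vanishes_def
  proof (intro allI impI, elim conjE)
    fix S A B C D x
    assume valid: "finite S" "A \<subseteq> S" "B \<subseteq> S" "C \<subseteq> S" "D \<subseteq> S" "A \<inter> B = {}" "C \<inter> D = {}" "x \<in> M (S - A - B)"
    consider "A \<inter> C = {}" "B \<inter> D = {}" | "A \<inter> C = {}" "B \<inter> D \<noteq> {}" | "A \<inter> C \<noteq> {}" "B \<inter> D = {}"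
      | "A \<inter> C \<noteq> {}" "B \<inter> D \<noteq> {}"
      by blast
    then show "B_defect \<phi> S A B C D x = 0"
    proof cases
      case 1
      then have "\<phi> (S - C) D A (\<phi> (S - A) C B x) = \<phi> (S - D) C B (\<phi> (S - B) D A x)"
        using B1 valid unfolding cond_B1_def by blast
      then show ?thesis
        using B_defect_disjoint[OF 1, of \<phi> S x] by simp
    next
      case 2
      then show ?thesis
        using B_defect_eq_0_if_cond_B2[OF B2 valid] by blast
    next
      case 3
      have "B_defect \<phi> S B A D C x = 0"
        using 3 valid by (intro B_defect_eq_0_if_cond_B2[OF B2]) (auto simp: diff_swap Int_commute)
      then show ?thesis
        using B_defect_swap[of \<phi> S B A D C x] by simp
    next
      case 4
      then have "(\<Sum>X\<in>Pow (B \<inter> D). \<phi> (S - X) ((D - X) \<union> C) (A \<union> (B - X)) x) =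
          (\<Sum>X\<in>Pow (A \<inter> C). \<phi> (S - X) ((C - X) \<union> D) (B \<union> (A - X)) x)"
        using B3 valid unfolding cond_B3_def by blast
      then show ?thesis
        using B_defect_double_overlap[OF 4, of \<phi> S x] by simp
    qed
  qed
qed

lemma cond_B1_if_B_defect_vanishes:
  assumes "B_defect_vanishes M \<phi>"
  shows "cond_B1 M \<phi>"
  unfolding cond_B1_def
proof (intro allI impI ballI, elim conjE)
  fix S A B C D x
  assume "finite S" "A \<subseteq> S" "B \<subseteq> S" "C \<subseteq> S" "D \<subseteq> S" "A \<inter> B = {}" "C \<inter> D = {}"
    and disjoint: "A \<inter> C = {}" "B \<inter> D = {}" and "x \<in> M (S - A - B)"
  then show "\<phi> (S - C) D A (\<phi> (S - A) C B x) = \<phi> (S - D) C B (\<phi> (S - B) D A x)"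
    using B_defect_vanishesD[OF assms] B_defect_disjoint[OF disjoint, of \<phi> S x] by simp
qed

lemma cond_B2_if_B_defect_vanishes:
  assumes "B_defect_vanishes M \<phi>"
  shows "cond_B2 M \<phi>"
  unfolding cond_B2_def
proof (intro allI impI ballI, elim conjE)
  fix S A B C D x
  assume "finite S" "A \<subseteq> S" "B \<subseteq> S" "C \<subseteq> S" "D \<subseteq> S" "A \<inter> B = {}" "C \<inter> D = {}"
    and overlap: "A \<inter> C = {}" "B \<inter> D \<noteq> {}" and "x \<in> M (S - A - B)"
  moreover have "finite (B \<inter> D)"
    using \<open>finite S\<close> \<open>B \<subseteq> S\<close> finite_subset by blast
  ultimately show "\<phi> (S - C) D A (\<phi> (S - A) C B x) =
      (\<Sum>X\<in>Pow (B \<inter> D) - {{}}. \<phi> (S - X) ((D - X) \<union> C) (A \<union> (B - X)) x)"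
    using B_defect_vanishesD[OF assms] B_defect_overlap[OF overlap, of \<phi> S x] by simp
qed

lemma cond_B3_if_B_defect_vanishes:
  assumes "B_defect_vanishes M \<phi>"
  shows "cond_B3 M \<phi>"
  unfolding cond_B3_def
proof (intro allI impI ballI, elim conjE)
  fix S A B C D x
  assume "finite S" "A \<subseteq> S" "B \<subseteq> S" "C \<subseteq> S" "D \<subseteq> S" "A \<inter> B = {}" "C \<inter> D = {}"
    and overlap: "A \<inter> C \<noteq> {}" "B \<inter> D \<noteq> {}" and "x \<in> M (S - A - B)"
  then show "(\<Sum>X\<in>Pow (B \<inter> D). \<phi> (S - X) ((D - X) \<union> C) (A \<union> (B - X)) x) =
      (\<Sum>X\<in>Pow (A \<inter> C). \<phi> (S - X) ((C - X) \<union> D) (B \<union> (A - X)) x)"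
    using B_defect_vanishesD[OF assms] B_defect_double_overlap[OF overlap, of \<phi> S x] by simp
qed

lemma B_conditions_iff_B_defect_vanishes:
  "cond_B1 M \<phi> \<and> cond_B2 M \<phi> \<and> cond_B3 M \<phi> \<longleftrightarrow> B_defect_vanishes M \<phi>"
  using B_defect_vanishes_if_conditions cond_B1_if_B_defect_vanishes cond_B2_if_B_defect_vanishes
    cond_B3_if_B_defect_vanishes
  by blast

theorem proposition7p4:
  fixes scale :: "'k::comm_ring_1 \<Rightarrow> 'm::ab_group_add \<Rightarrow> 'm"
    and M :: "'u set \<Rightarrow> 'm set"
    and act :: "('u \<Rightarrow> 'u) \<Rightarrow> 'u set \<Rightarrow> 'm \<Rightarrow> 'm"
    and a :: "'u set \<Rightarrow> ('u set \<Rightarrow> 'm) \<Rightarrow> 'u set \<Rightarrow> 'm"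
    and \<phi> :: "'u set \<Rightarrow> 'u set \<Rightarrow> 'u set \<Rightarrow> 'm \<Rightarrow> 'm"
  assumes "FB_module scale M act"
    and "PM_linear_endo scale M a"
    and "assoc_op M a \<phi>"
    and "natural_op M act \<phi>"
  shows "is_weyl_rep M a \<longleftrightarrow> (cond_B1 M \<phi> \<and> cond_B2 M \<phi> \<and> cond_B3 M \<phi>)"
proof -
  have "\<forall>S. finite S \<longrightarrow> 0 \<in> M S \<and> (\<forall>x\<in>M S. \<forall>y\<in>M S. x + y \<in> M S) \<and> (\<forall>c. \<forall>x\<in>M S. scale c x \<in> M S)"
    using assms(1) unfolding FB_module_def by (elim conjE)
  moreover have "\<forall>S. finite S \<longrightarrow> (\<forall>f. PM_elem M S f \<longrightarrow> PM_elem M S (a S f)) \<and>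
      (\<forall>f g. PM_elem M S f \<and> PM_elem M S g \<longrightarrow> a S (\<lambda>B. f B + g B) = (\<lambda>A. a S f A + a S g A))"
    using assms(2) unfolding PM_linear_endo_def by blast
  ultimately interpret PM_endo M a \<phi>
    using assms(3) by unfold_locales simp_all
  show ?thesis
    by (simp only: weyl_rep_iff_B_defect_vanishes B_conditions_iff_B_defect_vanishes)
qed

end
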